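(* Let $N,d\in\mathbb N$, let $D$ be a set and $C\subseteq D$, and let $b_0,b_1,\ldots,b_N:D\to\mathbb R$ be functions such that $b_k(\mathbf t)\ge 0$ for all $k$ and $\sum_{k=0}^N b_k(\mathbf t)=1$ for every $\mathbf t\in C$. Let $\omega_0,\ldots,\omega_N>0$ be weights and $\mathbf W_0,\ldots,\mathbf W_N\in\mathbb R^d$ control points, and define $$\mathbf S_N(\mathbf t):=\frac{\sum_{k=0}^N\omega_k\mathbf W_k b_k(\mathbf t)}{\sum_{k=0}^N\omega_k b_k(\mathbf t)}\qquad(\mathbf t\in C).$$ Fix $\mathbf t\in C$ with $b_k(\mathbf t)>0$ for $1\le k\le N$. Define $h_0:=1$, $\mathbf Q_0:=\mathbf W_0$ and, for $k=1,\ldots,N$, $$h_k:=\left(1+\frac{\omega_{k-1}b_{k-1}(\mathbf t)}{h_{k-1}\,\omega_k b_k(\mathbf t)}\right)^{-1},\qquad \mathbf Q_k:=(1-h_k)\mathbf Q_{k-1}+h_k\mathbf W_k .$$ Then these quantities are well defined and, for every $k=0,1,\ldots,N$: $h_k\in[0,1]$, $\mathbf Q_k\in\mathbb R^d$, and $\mathbf Q_k\in\operatorname{conv}\{\mathbf W_0,\mathbf W_1,\ldots,\mathbf W_k\}$ (so $\operatorname{conv}\{\mathbf Q_0,\ldots,\mathbf Q_k\}\subseteq\operatorname{conv}\{\mathbf W_0,\ldots,\mathbf W_k\}$). Moreover, $\mathbf S_N(\mathbf t)=\mathbf Q_N$.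
   Context: $\operatorname{conv}$ denotes the convex hull. The Euclidean space $\mathbb E^d$ of the paper is identified with $\mathbb R^d$. *)

theory Defs
  imports "HOL-Analysis.Analysis"
begin

text \<open>Rational Bernstein-type curve S_N and the recursive quantities h_k, Q_k,
  with the parameter point t fixed: bt k stands for b_k(t).\<close>

definition S_N :: "nat \<Rightarrow> (nat \<Rightarrow> real) \<Rightarrow> (nat \<Rightarrow> 'v::real_vector) \<Rightarrow> (nat \<Rightarrow> 'a \<Rightarrow> real) \<Rightarrow> 'a \<Rightarrow> 'v" where
  "S_N N \<omega> W b t = (1 / (\<Sum>k=0..N. \<omega> k * b k t)) *\<^sub>R (\<Sum>k=0..N. (\<omega> k * b k t) *\<^sub>R W k)"

fun hseq :: "(nat \<Rightarrow> real) \<Rightarrow> (nat \<Rightarrow> real) \<Rightarrow> nat \<Rightarrow> real" where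
  "hseq \<omega> bt 0 = 1"
| "hseq \<omega> bt (Suc k) = inverse (1 + (\<omega> k * bt k) / (hseq \<omega> bt k * (\<omega> (Suc k) * bt (Suc k))))"

fun Qseq :: "(nat \<Rightarrow> real) \<Rightarrow> (nat \<Rightarrow> real) \<Rightarrow> (nat \<Rightarrow> 'v::real_vector) \<Rightarrow> nat \<Rightarrow> 'v" where
  "Qseq \<omega> bt W 0 = W 0"
| "Qseq \<omega> bt W (Suc k) = (1 - hseq \<omega> bt (Suc k)) *\<^sub>R Qseq \<omega> bt W k + hseq \<omega> bt (Suc k) *\<^sub>R W (Suc k)"

end

theory Submission
  imports Defs
begin

text \<open>Writing \<open>a\<^sub>j = \<omega>\<^sub>j b\<^sub>j(t)\<close> and \<open>s\<^sub>k = a\<^sub>0 + \<dots> + a\<^sub>k\<close>, induction on \<open>k\<close> gives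
  \<open>h\<^sub>k s\<^sub>k = a\<^sub>k\<close>, i.e. \<open>h\<^sub>k\<close> is the share of the newest weight in \<open>s\<^sub>k\<close>. Consequently
  \<open>s\<^sub>k Q\<^sub>k = a\<^sub>0 W\<^sub>0 + \<dots> + a\<^sub>k W\<^sub>k\<close>: the point \<open>Q\<^sub>k\<close> is the \<open>a\<close>-weighted mean of
  \<open>W\<^sub>0, \<dots>, W\<^sub>k\<close>, which for \<open>k = N\<close> is \<open>S\<^sub>N(t)\<close>. Since \<open>h\<^sub>k \<in> [0,1]\<close>, each \<open>Q\<^sub>k\<close> is a
  convex combination of \<open>Q\<^sub>k\<^sub>-\<^sub>1\<close> and \<open>W\<^sub>k\<close>, hence lies in the convex hull of \<open>W\<^sub>0, \<dots>, W\<^sub>k\<close>.\<close>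

context
  fixes \<omega> bt :: "nat \<Rightarrow> real" and N :: nat
  assumes weight_nonneg: "\<And>k. k \<le> N \<Longrightarrow> 0 \<le> \<omega> k * bt k"
    and weight_pos: "\<And>k. 1 \<le> k \<Longrightarrow> k \<le> N \<Longrightarrow> 0 < \<omega> k * bt k"
begin

lemma hseq_pos_and_mult_partial_sum:
  "k \<le> N \<Longrightarrow> 0 < hseq \<omega> bt k \<and> hseq \<omega> bt k * (\<Sum>j=0..k. \<omega> j * bt j) = \<omega> k * bt k"
proof (induction k)
  case 0
  then show ?case by simp
next
  case (Suc k)
  define a where "a j = \<omega> j * bt j" for j
  define s where "s = (\<Sum>j=0..k. a j)"
  have IH: "0 < hseq \<omega> bt k" "hseq \<omega> bt k * s = a k"
    using Suc by (auto simp: a_def s_def)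
  have a_pos: "0 < a (Suc k)" using weight_pos Suc.prems by (simp add: a_def)
  have s_nonneg: "0 \<le> s"
    unfolding s_def a_def using weight_nonneg Suc.prems by (intro sum_nonneg) auto
  have "a k / (hseq \<omega> bt k * a (Suc k)) = s / a (Suc k)"
    using IH by (simp add: IH(2)[symmetric])
  then have "hseq \<omega> bt (Suc k) = inverse (1 + s / a (Suc k))"
    by (simp add: a_def)
  also have "\<dots> = a (Suc k) / (s + a (Suc k))"
    using a_pos s_nonneg by (simp add: field_simps)
  finally have "hseq \<omega> bt (Suc k) = a (Suc k) / (s + a (Suc k))" .
  then have "0 < hseq \<omega> bt (Suc k)" "hseq \<omega> bt (Suc k) * (s + a (Suc k)) = a (Suc k)"
    using a_pos s_nonneg by auto
  moreover have "(\<Sum>j=0..Suc k. \<omega> j * bt j) = s + a (Suc k)"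
    by (simp add: s_def a_def)
  ultimately show ?case by (simp add: a_def)
qed

lemma hseq_pos: "k \<le> N \<Longrightarrow> 0 < hseq \<omega> bt k"
  using hseq_pos_and_mult_partial_sum by blast

lemma hseq_mult_partial_sum:
  "k \<le> N \<Longrightarrow> hseq \<omega> bt k * (\<Sum>j=0..k. \<omega> j * bt j) = \<omega> k * bt k"
  using hseq_pos_and_mult_partial_sum by blast

lemma hseq_le_one:
  assumes "k \<le> N"
  shows "hseq \<omega> bt k \<le> 1"
proof (cases k)
  case 0
  then show ?thesis by simp
next
  case (Suc m)
  define S where "S = (\<Sum>j=0..k. \<omega> j * bt j)"
  have "\<omega> k * bt k \<le> S"
    unfolding S_def using weight_nonneg assms by (intro member_le_sum) auto
  moreover have "0 < \<omega> k * bt k" using weight_pos assms Suc by simp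
  moreover have "hseq \<omega> bt k * S = \<omega> k * bt k"
    using hseq_mult_partial_sum[OF assms] by (simp add: S_def)
  ultimately have "hseq \<omega> bt k * S \<le> 1 * S" "0 < S" by linarith+
  then show ?thesis by simp
qed

lemma hseq_well_defined:
  assumes "k \<in> {1..N}"
  shows "hseq \<omega> bt (k - 1) * (\<omega> k * bt k) \<noteq> 0"
    and "1 + (\<omega> (k - 1) * bt (k - 1)) / (hseq \<omega> bt (k - 1) * (\<omega> k * bt k)) \<noteq> 0"
proof -
  have "0 < hseq \<omega> bt (k - 1)" "0 < \<omega> k * bt k" "0 \<le> \<omega> (k - 1) * bt (k - 1)"
    using assms hseq_pos weight_pos weight_nonneg by auto
  then show "hseq \<omega> bt (k - 1) * (\<omega> k * bt k) \<noteq> 0"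
    and "1 + (\<omega> (k - 1) * bt (k - 1)) / (hseq \<omega> bt (k - 1) * (\<omega> k * bt k)) \<noteq> 0"
    by (auto simp: add_nonneg_eq_0_iff)
qed

lemma scaleR_partial_sum_Qseq:
  fixes W :: "nat \<Rightarrow> 'v::real_vector"
  shows "k \<le> N \<Longrightarrow> (\<Sum>j=0..k. \<omega> j * bt j) *\<^sub>R Qseq \<omega> bt W k = (\<Sum>j=0..k. (\<omega> j * bt j) *\<^sub>R W j)"
proof (induction k)
  case 0
  then show ?case by simp
next
  case (Suc k)
  define s where "s = (\<Sum>j=0..k. \<omega> j * bt j)"
  let ?a = "\<omega> (Suc k) * bt (Suc k)"
  let ?h = "hseq \<omega> bt (Suc k)"
  have h: "?h * (s + ?a) = ?a"
    using hseq_mult_partial_sum[OF Suc.prems] by (simp add: s_def)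
  have "(s + ?a) *\<^sub>R Qseq \<omega> bt W (Suc k)
      = ((s + ?a) * (1 - ?h)) *\<^sub>R Qseq \<omega> bt W k + ((s + ?a) * ?h) *\<^sub>R W (Suc k)"
    by (simp add: scaleR_add_right)
  also have "\<dots> = s *\<^sub>R Qseq \<omega> bt W k + ?a *\<^sub>R W (Suc k)"
    using h by (simp add: algebra_simps)
  finally show ?case using Suc by (simp add: s_def)
qed

lemma Qseq_in_convex_hull:
  fixes W :: "nat \<Rightarrow> 'v::real_vector"
  shows "k \<le> N \<Longrightarrow> Qseq \<omega> bt W k \<in> convex hull (W ` {0..k})"
proof (induction k)
  case 0
  then show ?case by (simp add: hull_inc)
next
  case (Suc k)
  have "convex hull (W ` {0..k}) \<subseteq> convex hull (W ` {0..Suc k})"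
    by (intro hull_mono) auto
  then have "Qseq \<omega> bt W k \<in> convex hull (W ` {0..Suc k})"
    using Suc by auto
  moreover have "W (Suc k) \<in> convex hull (W ` {0..Suc k})"
    by (intro hull_inc) auto
  ultimately show ?case
    using hseq_pos[OF Suc.prems] hseq_le_one[OF Suc.prems]
    by (simp add: convexD_alt[OF convex_convex_hull])
qed

lemma convex_hull_Qseq_subset:
  fixes W :: "nat \<Rightarrow> 'v::real_vector"
  assumes "k \<le> N"
  shows "convex hull (Qseq \<omega> bt W ` {0..k}) \<subseteq> convex hull (W ` {0..k})"
proof (rule hull_minimal[where S=convex, OF _ convex_convex_hull], clarify)
  fix j assume "j \<in> {0..k}"
  then have "Qseq \<omega> bt W j \<in> convex hull (W ` {0..j})" "W ` {0..j} \<subseteq> W ` {0..k}"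
    using Qseq_in_convex_hull[of j W] assms by auto
  then show "Qseq \<omega> bt W j \<in> convex hull (W ` {0..k})"
    using hull_mono by blast
qed

end

lemma S_N_eq_Qseq:
  assumes "\<And>k. k \<le> N \<Longrightarrow> 0 \<le> \<omega> k * b k t"
    and "\<And>k. 1 \<le> k \<Longrightarrow> k \<le> N \<Longrightarrow> 0 < \<omega> k * b k t"
    and "(\<Sum>k=0..N. \<omega> k * b k t) \<noteq> 0"
  shows "S_N N \<omega> W b t = Qseq \<omega> (\<lambda>j. b j t) W N"
proof -
  have weighted_sum: "(\<Sum>j=0..N. \<omega> j * b j t) *\<^sub>R Qseq \<omega> (\<lambda>j. b j t) W N = (\<Sum>j=0..N. (\<omega> j * b j t) *\<^sub>R W j)"
    using scaleR_partial_sum_Qseq[of N \<omega> "\<lambda>j. b j t" N W] assms(1,2) by simp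
  show ?thesis
    unfolding S_N_def weighted_sum[symmetric] using assms(3) by simp
qed

theorem theorem1:
  fixes N :: nat and D C :: "'a set" and b :: "nat \<Rightarrow> 'a \<Rightarrow> real"
    and \<omega> :: "nat \<Rightarrow> real" and W :: "nat \<Rightarrow> real ^ 'd" and t :: 'a
  assumes "C \<subseteq> D"
    and "\<And>k s. s \<in> C \<Longrightarrow> b k s \<ge> 0"
    and "\<And>s. s \<in> C \<Longrightarrow> (\<Sum>k=0..N. b k s) = 1"
    and "\<And>k. k \<le> N \<Longrightarrow> \<omega> k > 0"
    and "t \<in> C"
    and "\<And>k. 1 \<le> k \<Longrightarrow> k \<le> N \<Longrightarrow> b k t > 0"
  shows "(\<forall>k\<in>{1..N}. hseq \<omega> (\<lambda>j. b j t) (k - 1) * (\<omega> k * b k t) \<noteq> 0 \<and>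
            1 + (\<omega> (k - 1) * b (k - 1) t) / (hseq \<omega> (\<lambda>j. b j t) (k - 1) * (\<omega> k * b k t)) \<noteq> 0)
       \<and> (\<Sum>k=0..N. \<omega> k * b k t) \<noteq> 0
       \<and> (\<forall>k\<le>N. hseq \<omega> (\<lambda>j. b j t) k \<in> {0..1}
              \<and> Qseq \<omega> (\<lambda>j. b j t) W k \<in> convex hull (W ` {0..k})
              \<and> convex hull (Qseq \<omega> (\<lambda>j. b j t) W ` {0..k}) \<subseteq> convex hull (W ` {0..k}))
       \<and> S_N N \<omega> W b t = Qseq \<omega> (\<lambda>j. b j t) W N"
proof -
  have nonneg: "\<And>k. k \<le> N \<Longrightarrow> 0 \<le> \<omega> k * b k t"
    using assms(2,4,5) by (simp add: less_imp_le)
  have pos: "\<And>k. 1 \<le> k \<Longrightarrow> k \<le> N \<Longrightarrow> 0 < \<omega> k * b k t"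
    using assms(4,6) by simp
  have "\<omega> N * b N t \<le> (\<Sum>k=0..N. \<omega> k * b k t)"
    using nonneg by (intro member_le_sum) auto
  moreover have "0 < \<omega> N * b N t"
    \<comment> \<open>for \<open>N = 0\<close> this is where the partition of unity \<open>b\<^sub>0(t) = 1\<close> is needed\<close>
    using pos assms(3)[OF assms(5)] assms(4)[of 0] by (cases N) auto
  ultimately have sum_pos: "0 < (\<Sum>k=0..N. \<omega> k * b k t)" by linarith
  have "hseq \<omega> (\<lambda>j. b j t) k \<in> {0..1}" if "k \<le> N" for k
    using hseq_pos[of N \<omega> "\<lambda>j. b j t" k] hseq_le_one[of N \<omega> "\<lambda>j. b j t" k] nonneg pos that
    by simp
  moreover have "S_N N \<omega> W b t = Qseq \<omega> (\<lambda>j. b j t) W N"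
    using S_N_eq_Qseq[of N \<omega> b t W] nonneg pos sum_pos by simp
  ultimately show ?thesis
    using hseq_well_defined[of N \<omega> "\<lambda>j. b j t"] Qseq_in_convex_hull[of N \<omega> "\<lambda>j. b j t" _ W]
      convex_hull_Qseq_subset[of N \<omega> "\<lambda>j. b j t" _ W] nonneg pos sum_pos
    by simp
qed

end
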